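(* Let Assumptions (A) hold, $\ell>0$, $x_0\in\mathcal H^s_\cap$, and consider the RWM chain at step $k$. Conditionally on $x_k$ (the randomness being that of $\xi_{k+1}^N$), $$\mathrm{Wass}(R,G)\lesssim\frac1{\sqrt N},\qquad\mathrm{Wass}(G,Z_{\ell,k})\lesssim\frac{\sqrt{1+\|x_k\|_s^2}}{\sqrt N},$$ and consequently $\mathrm{Wass}(R,Z_{\ell,k})\le\mathbb E|R-Z_{\ell,k}|\lesssim\frac{\sqrt{1+\|x_k\|_s^2}}{\sqrt N}$, with implicit constants independent of $N$, $k$ and $x_k$.
   Context: $\mathcal H$, $\mathcal C$, $\phi_j$, $\lambda_j^2$, $x^j=\langle x,\phi_j\rangle$, $\mathcal H^r$ (norm $\|x\|_r^2=\sum_jj^{2r}(x^j)^2$), $(\mathcal H^s)^*\cong\mathcal H^{-s}$; $\mathcal P^N$ projection onto $\mathrm{span}\{\phi_1..\phi_N\}$, $x^N=\mathcal P^Nx$. Assumptions (A): (1) $\lambda_j\asymp j^{-\kappa}$, $\kappa>1/2$; (2) $\Psi:\mathcal H^s\to\mathbb R$ defined everywhere, $s\in[0,\kappa-1/2)$; (3) $0\le\Psi(x)\lesssim1+\|x\|_s^2$; (4) $\|\nabla\Psi(x)\|_{-s}\lesssim1+\|x\|_s$, $\|\partial^2\Psi(x)\|_{\mathcal L(\mathcal H^s,\mathcal H^{-s})}\lesssim1$. RWM chain started at $x_0$: given $x_k$, $\xi^N_{k+1}=\sum_{i\le N}\xi^{i,N}_{k+1}\phi_i$ (i.i.d. $\mathcal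 N(0,1)$, independent of past), $y_{k+1}=x_k+\sqrt{2\ell^2/N}\mathcal C^{1/2}\xi^N_{k+1}$, $Q_k=\frac12\sum_{i\le N}|x^i_k|^2/\lambda_i^2-\frac12\sum_{i\le N}|y^i_{k+1}|^2/\lambda_i^2+\Psi(x^N_k)-\Psi(y^N_{k+1})$, $\gamma_{k+1}\sim$ Bernoulli$(1\wedge e^{Q_k})$, $x_{k+1}=x_k+\gamma_{k+1}\sqrt{2\ell^2/N}\mathcal C^{1/2}\xi^N_{k+1}$. Define $\zeta^N_k=\mathcal C^{-1/2}x^N_k+\mathcal C^{1/2}\mathcal P^N(\nabla\Psi(x^N_k))$ with components $\zeta^{j,N}_k$, and $R=-\frac{\ell^2}N\sum_{i=1}^N|\xi^{i,N}_{k+1}|^2-\sqrt{\frac{2\ell^2}N}\sum_{j=1}^N\zeta^{j,N}_k\xi^{j,N}_{k+1}$, $G=-\ell^2-\sqrt{\frac{2\ell^2}N}\sum_{j=1}^N\zeta^{j,N}_k\xi^{j,N}_{k+1}$, $Z_{\ell,k}=-\ell^2-\sqrt{\frac{2\ell^2}N}\sum_{j=1}^N\frac{x^j_k}{\lambda_j}\xi^{j,N}_{k+1}$. Wasserstein distance: $\mathrm{Wass}(X,Y)=\sup_{f\ \text{1-Lipschitz}}\mathbb E(f(X)-f(Y))$. $\mathcal H^s_\cap=\{x\in\mathcal H^s:\lim_N\frac1N\sum_{i\le N}|x^i|^2/\lambda_i^2\text{ exists and is finite}\}$. *)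

theory Defs
  imports "HOL-Probability.Probability"
begin

text \<open>Coordinates: an element x of H is represented by its coordinate sequence
  j \<mapsto> x^{j+1} = <x, phi_{j+1}> (0-based indexing: index j stands for phi_{j+1}).
  lam j stands for lambda_{j+1}.\<close>

definition hnorm :: "real \<Rightarrow> (nat \<Rightarrow> real) \<Rightarrow> real" where
  "hnorm r x = sqrt (\<Sum>j. real (Suc j) powr (2 * r) * (x j)\<^sup>2)"

definition Hsp :: "real \<Rightarrow> (nat \<Rightarrow> real) set" where
  "Hsp r = {x. summable (\<lambda>j. real (Suc j) powr (2 * r) * (x j)\<^sup>2)}"

definition pairing :: "(nat \<Rightarrow> real) \<Rightarrow> (nat \<Rightarrow> real) \<Rightarrow> real" where
  "pairing g h = (\<Sum>j. g j * h j)"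

definition Hcap :: "real \<Rightarrow> (nat \<Rightarrow> real) \<Rightarrow> (nat \<Rightarrow> real) set" where
  "Hcap s lam = {x \<in> Hsp s.
     convergent (\<lambda>N. (1 / real N) * (\<Sum>i<N. (x i)\<^sup>2 / (lam i)\<^sup>2))}"

definition is_gradient :: "real \<Rightarrow> ((nat \<Rightarrow> real) \<Rightarrow> real) \<Rightarrow> (nat \<Rightarrow> real) \<Rightarrow> (nat \<Rightarrow> real) \<Rightarrow> bool" where
  "is_gradient s Psi x g \<longleftrightarrow> g \<in> Hsp (-s) \<and>
     (\<forall>e>0. \<exists>d>0. \<forall>h\<in>Hsp s. hnorm s h < d \<longrightarrow>
        \<bar>Psi (\<lambda>j. x j + h j) - Psi x - pairing g h\<bar> \<le> e * hnorm s h)"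

definition bdd_op :: "real \<Rightarrow> real \<Rightarrow> ((nat \<Rightarrow> real) \<Rightarrow> (nat \<Rightarrow> real)) \<Rightarrow> bool" where
  "bdd_op s K D \<longleftrightarrow>
     (\<forall>a b h1 h2. h1 \<in> Hsp s \<longrightarrow> h2 \<in> Hsp s \<longrightarrow>
        D (\<lambda>j. a * h1 j + b * h2 j) = (\<lambda>j. a * D h1 j + b * D h2 j)) \<and>
     (\<forall>h\<in>Hsp s. D h \<in> Hsp (-s) \<and> hnorm (-s) (D h) \<le> K * hnorm s h)"

definition is_hessian :: "real \<Rightarrow> ((nat \<Rightarrow> real) \<Rightarrow> (nat \<Rightarrow> real)) \<Rightarrow> (nat \<Rightarrow> real) \<Rightarrow>
    ((nat \<Rightarrow> real) \<Rightarrow> (nat \<Rightarrow> real)) \<Rightarrow> bool" where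
  "is_hessian s grad x D \<longleftrightarrow>
     (\<forall>e>0. \<exists>d>0. \<forall>h\<in>Hsp s. hnorm s h < d \<longrightarrow>
        hnorm (-s) (\<lambda>j. grad (\<lambda>i. x i + h i) j - grad x j - D h j) \<le> e * hnorm s h)"

definition projN :: "nat \<Rightarrow> (nat \<Rightarrow> real) \<Rightarrow> (nat \<Rightarrow> real)" where
  "projN N x = (\<lambda>j. if j < N then x j else 0)"

definition xi_space :: "nat \<Rightarrow> (nat \<Rightarrow> real) measure" where
  "xi_space N = PiM {..<N} (\<lambda>_. density lborel std_normal_density)"

definition zeta :: "(nat \<Rightarrow> real) \<Rightarrow> ((nat \<Rightarrow> real) \<Rightarrow> (nat \<Rightarrow> real)) \<Rightarrow> nat \<Rightarrow> (nat \<Rightarrow> real) \<Rightarrow> nat \<Rightarrow> real" where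
  "zeta lam grad N x j = projN N x j / lam j + lam j * grad (projN N x) j"

definition R_var :: "(nat \<Rightarrow> real) \<Rightarrow> ((nat \<Rightarrow> real) \<Rightarrow> (nat \<Rightarrow> real)) \<Rightarrow> real \<Rightarrow> nat \<Rightarrow> (nat \<Rightarrow> real) \<Rightarrow> (nat \<Rightarrow> real) \<Rightarrow> real" where
  "R_var lam grad l N x xi = - (l\<^sup>2 / real N) * (\<Sum>i<N. (xi i)\<^sup>2)
      - sqrt (2 * l\<^sup>2 / real N) * (\<Sum>j<N. zeta lam grad N x j * xi j)"

definition G_var :: "(nat \<Rightarrow> real) \<Rightarrow> ((nat \<Rightarrow> real) \<Rightarrow> (nat \<Rightarrow> real)) \<Rightarrow> real \<Rightarrow> nat \<Rightarrow> (nat \<Rightarrow> real) \<Rightarrow> (nat \<Rightarrow> real) \<Rightarrow> real" where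
  "G_var lam grad l N x xi = - l\<^sup>2
      - sqrt (2 * l\<^sup>2 / real N) * (\<Sum>j<N. zeta lam grad N x j * xi j)"

definition Z_var :: "(nat \<Rightarrow> real) \<Rightarrow> real \<Rightarrow> nat \<Rightarrow> (nat \<Rightarrow> real) \<Rightarrow> (nat \<Rightarrow> real) \<Rightarrow> real" where
  "Z_var lam l N x xi = - l\<^sup>2 - sqrt (2 * l\<^sup>2 / real N) * (\<Sum>j<N. x j / lam j * xi j)"

definition wass :: "'a measure \<Rightarrow> ('a \<Rightarrow> real) \<Rightarrow> ('a \<Rightarrow> real) \<Rightarrow> ereal" where
  "wass M X Y = (SUP f \<in> {f :: real \<Rightarrow> real. lipschitz_on 1 UNIV f}.
      ereal (\<integral>\<omega>. f (X \<omega>) - f (Y \<omega>) \<partial>M))"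

end

theory Submission
  imports Defs
begin

text \<open>Both differences are centred sums of independent functions of the Gaussian coordinates:
  \<open>R - G = -(l\<^sup>2/N) \<Sum>\<^sub>i (\<xi>\<^sub>i\<^sup>2 - 1)\<close> and
  \<open>G - Z = -sqrt (2 l\<^sup>2/N) \<Sum>\<^sub>i \<lambda>\<^sub>i (\<nabla>\<Psi>(x\<^sup>N))\<^sub>i \<xi>\<^sub>i\<close>.
  By Jensen their \<open>L\<^sup>1\<close> norms are bounded by their \<open>L\<^sup>2\<close> norms, which the Gaussian moments give
  exactly. Since \<open>\<lambda>\<^sub>j \<lesssim> j\<^sup>-\<^sup>\<kappa> \<le> j\<^sup>-\<^sup>s\<close>, the sum \<open>\<Sum>\<^sub>i \<lambda>\<^sub>i\<^sup>2 (\<nabla>\<Psi>(x\<^sup>N))\<^sub>i\<^sup>2\<close> is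
  \<open>\<lesssim> \<parallel>\<nabla>\<Psi>(x\<^sup>N)\<parallel>\<^sub>-\<^sub>s\<^sup>2 \<lesssim> 1 + \<parallel>x\<parallel>\<^sub>s\<^sup>2\<close>. The Wasserstein distance of two random variables on a
  common space is at most the \<open>L\<^sup>1\<close> norm of their difference.\<close>

lemma product_prob_space_const:
  assumes "prob_space M" shows "product_prob_space (\<lambda>_::'i. M)"
  using assms
  by (intro product_prob_space.intro product_sigma_finite.intro product_prob_space_axioms.intro
      prob_space_imp_sigma_finite)

lemma (in prob_space) integral_PiM_component_product:
  fixes f g :: "'a \<Rightarrow> real"
  assumes "finite I" "i \<in> I" "j \<in> I"
    and f: "integrable M f" and g: "integrable M g" and fg: "integrable M (\<lambda>t. f t * g t)"
  shows "integrable (PiM I (\<lambda>_. M)) (\<lambda>\<xi>. f (\<xi> i) * g (\<xi> j))"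
    and "(\<integral>\<xi>. f (\<xi> i) * g (\<xi> j) \<partial>PiM I (\<lambda>_. M)) =
      (if i = j then (\<integral>t. f t * g t \<partial>M) else (\<integral>t. f t \<partial>M) * (\<integral>t. g t \<partial>M))"
proof -
  interpret P: product_prob_space "\<lambda>_. M" I by (rule product_prob_space_const) unfold_locales
  define F where "F k = (\<lambda>t. (if k = i then f t else 1) * (if k = j then g t else 1))" for k
  have F_int: "integrable M (F k)" for k
    using f g fg by (cases "k = i"; cases "k = j") (simp_all add: F_def)
  have F_prod: "(\<Prod>k\<in>I. F k (\<xi> k)) = f (\<xi> i) * g (\<xi> j)" for \<xi>
    using assms(1-3) by (simp add: F_def prod.distrib)
  have "integrable (PiM I (\<lambda>_. M)) (\<lambda>\<xi>. \<Prod>k\<in>I. F k (\<xi> k))"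
    using F_int assms(1) by (intro P.product_integrable_prod)
  moreover have "(\<integral>\<xi>. (\<Prod>k\<in>I. F k (\<xi> k)) \<partial>PiM I (\<lambda>_. M)) = (\<Prod>k\<in>I. integral\<^sup>L M (F k))"
    using F_int assms(1) by (intro P.product_integral_prod)
  moreover have "(\<Prod>k\<in>I. integral\<^sup>L M (F k)) =
      (if i = j then (\<integral>t. f t * g t \<partial>M) else (\<integral>t. f t \<partial>M) * (\<integral>t. g t \<partial>M))" (is "_ = ?rhs")
  proof (cases "i = j")
    case True
    then have "integral\<^sup>L M (F k) = (if k = i then (\<integral>t. f t * g t \<partial>M) else 1)" for k
      by (simp add: F_def prob_space)
    then show ?thesis
      using True assms(1,2) by simp
  next
    case False
    then have "integral\<^sup>L M (F k) =
        (if k = i then (\<integral>t. f t \<partial>M) else 1) * (if k = j then (\<integral>t. g t \<partial>M) else 1)" for k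
      by (simp add: F_def prob_space)
    then show ?thesis
      using False assms(1-3) by (simp add: prod.distrib)
  qed
  ultimately show "integrable (PiM I (\<lambda>_. M)) (\<lambda>\<xi>. f (\<xi> i) * g (\<xi> j))"
    and "(\<integral>\<xi>. f (\<xi> i) * g (\<xi> j) \<partial>PiM I (\<lambda>_. M)) = ?rhs"
    by (simp_all add: F_prod)
qed

lemma (in prob_space) integral_PiM_sum_centred_square:
  fixes h :: "'a \<Rightarrow> real" and a :: "'i \<Rightarrow> real"
  assumes "finite I"
    and h: "integrable M h" "integrable M (\<lambda>t. (h t)\<^sup>2)" "(\<integral>t. h t \<partial>M) = 0"
  shows "integrable (PiM I (\<lambda>_. M)) (\<lambda>\<xi>. (\<Sum>i\<in>I. a i * h (\<xi> i))\<^sup>2)"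
    and "(\<integral>\<xi>. (\<Sum>i\<in>I. a i * h (\<xi> i))\<^sup>2 \<partial>PiM I (\<lambda>_. M)) =
      (\<integral>t. (h t)\<^sup>2 \<partial>M) * (\<Sum>i\<in>I. (a i)\<^sup>2)"
proof -
  let ?P = "PiM I (\<lambda>_. M)"
  have hh: "integrable M (\<lambda>t. h t * h t)"
    using h(2) by (simp add: power2_eq_square)
  have square: "(\<Sum>i\<in>I. a i * h (\<xi> i))\<^sup>2 = (\<Sum>i\<in>I. \<Sum>j\<in>I. a i * a j * (h (\<xi> i) * h (\<xi> j)))" for \<xi>
    by (simp add: power2_eq_square sum_product algebra_simps)
  have int: "integrable ?P (\<lambda>\<xi>. h (\<xi> i) * h (\<xi> j))"
    and cov: "(\<integral>\<xi>. h (\<xi> i) * h (\<xi> j) \<partial>?P) = (if i = j then (\<integral>t. (h t)\<^sup>2 \<partial>M) else 0)"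
    if "i \<in> I" "j \<in> I" for i j
    using integral_PiM_component_product[OF assms(1) that h(1) h(1) hh] h(3)
    by (simp_all add: power2_eq_square)
  have "(\<integral>\<xi>. (\<Sum>i\<in>I. \<Sum>j\<in>I. a i * a j * (h (\<xi> i) * h (\<xi> j))) \<partial>?P) =
      (\<Sum>i\<in>I. \<Sum>j\<in>I. a i * a j * (if i = j then (\<integral>t. (h t)\<^sup>2 \<partial>M) else 0))"
    using int cov by (simp add: Bochner_Integration.integral_sum Bochner_Integration.integrable_sum)
  also have "\<dots> = (\<integral>t. (h t)\<^sup>2 \<partial>M) * (\<Sum>i\<in>I. (a i)\<^sup>2)"
    using assms(1)
    by (simp add: sum_distrib_left power2_eq_square if_distrib[of "(*) _"] algebra_simps cong: if_cong)
  finally show "(\<integral>\<xi>. (\<Sum>i\<in>I. a i * h (\<xi> i))\<^sup>2 \<partial>?P) = (\<integral>t. (h t)\<^sup>2 \<partial>M) * (\<Sum>i\<in>I. (a i)\<^sup>2)"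
    by (simp add: square)
  show "integrable ?P (\<lambda>\<xi>. (\<Sum>i\<in>I. a i * h (\<xi> i))\<^sup>2)"
    using int by (simp add: square)
qed

lemma (in prob_space) integral_abs_PiM_sum_centred_le:
  fixes h :: "'a \<Rightarrow> real" and a :: "'i \<Rightarrow> real"
  assumes "finite I"
    and h: "integrable M h" "integrable M (\<lambda>t. (h t)\<^sup>2)" "(\<integral>t. h t \<partial>M) = 0"
  shows "integrable (PiM I (\<lambda>_. M)) (\<lambda>\<xi>. \<Sum>i\<in>I. a i * h (\<xi> i))"
    and "(\<integral>\<xi>. \<bar>\<Sum>i\<in>I. a i * h (\<xi> i)\<bar> \<partial>PiM I (\<lambda>_. M)) \<le>
      sqrt ((\<integral>t. (h t)\<^sup>2 \<partial>M) * (\<Sum>i\<in>I. (a i)\<^sup>2))"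
proof -
  let ?P = "PiM I (\<lambda>_. M)" and ?Y = "\<lambda>\<xi>. \<Sum>i\<in>I. a i * h (\<xi> i)"
  interpret P: prob_space ?P
    by (rule prob_space_PiM) (rule prob_space_axioms)
  note square = integral_PiM_sum_centred_square[OF assms, of a]
  have "?Y \<in> borel_measurable ?P"
    using h(1) by measurable
  then show Y: "integrable ?P ?Y"
    using square(1) by (rule P.square_integrable_imp_integrable)
  have "(\<integral>\<xi>. \<bar>?Y \<xi>\<bar> \<partial>?P)\<^sup>2 \<le> (\<integral>\<xi>. \<bar>?Y \<xi>\<bar>\<^sup>2 \<partial>?P)"
    using Y square(1) by (intro P.jensens_inequality[where I=UNIV]) (auto simp: convex_power2)
  then show "(\<integral>\<xi>. \<bar>?Y \<xi>\<bar> \<partial>?P) \<le> sqrt ((\<integral>t. (h t)\<^sup>2 \<partial>M) * (\<Sum>i\<in>I. (a i)\<^sup>2))"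
    by (simp add: square(2) real_le_rsqrt)
qed

abbreviation std_normal :: "real measure" where
  "std_normal \<equiv> density lborel std_normal_density"

lemma prob_space_std_normal: "prob_space std_normal"
  by (rule prob_space_normal_density) simp

lemma xi_space_eq_PiM: "xi_space N = PiM {..<N} (\<lambda>_. std_normal)"
  by (simp add: xi_space_def)

lemma std_normal_power:
  shows "integrable std_normal (\<lambda>t. t ^ k)"
    and "(\<integral>t. t ^ k \<partial>std_normal) = (\<integral>t. std_normal_density t * t ^ k \<partial>lborel)"
  by (auto simp: integrable_density integral_density normal_density_nonneg
      integrable_std_normal_moment)

lemma std_normal_identity_moments:
  "integrable std_normal (\<lambda>t. t)" "integrable std_normal (\<lambda>t. t\<^sup>2)"
  "(\<integral>t. t \<partial>std_normal) = 0" "(\<integral>t. t\<^sup>2 \<partial>std_normal) = 1"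
  using std_normal_power[of 1] std_normal_power[of 2]
    integral_std_normal_moment_odd[of 0] integral_std_normal_moment_even[of 1]
  by simp_all

lemma std_normal_square_minus_one_moments:
  "integrable std_normal (\<lambda>t. t\<^sup>2 - 1)" "integrable std_normal (\<lambda>t. (t\<^sup>2 - 1)\<^sup>2)"
  "(\<integral>t. t\<^sup>2 - 1 \<partial>std_normal) = 0" "(\<integral>t. (t\<^sup>2 - 1)\<^sup>2 \<partial>std_normal) = 2"
proof -
  interpret prob_space std_normal by (rule prob_space_std_normal)
  have expand: "(t\<^sup>2 - 1)\<^sup>2 = t ^ 4 - 2 * t\<^sup>2 + 1" for t :: real
    by (simp add: power2_eq_square power4_eq_xxxx algebra_simps)
  have m4: "(\<integral>t. t ^ 4 \<partial>std_normal) = 3"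
    using std_normal_power(2)[of 4] integral_std_normal_moment_even[of 2]
    by (simp add: fact_numeral)
  have "prob UNIV = 1"
    using prob_space by simp
  note m2 = std_normal_identity_moments(2,4) and m4' = std_normal_power(1)[of 4]
  show "integrable std_normal (\<lambda>t. t\<^sup>2 - 1)" "(\<integral>t. t\<^sup>2 - 1 \<partial>std_normal) = 0"
    using m2 \<open>prob UNIV = 1\<close> by simp_all
  show "integrable std_normal (\<lambda>t. (t\<^sup>2 - 1)\<^sup>2)" "(\<integral>t. (t\<^sup>2 - 1)\<^sup>2 \<partial>std_normal) = 2"
    using m2 m4 m4' \<open>prob UNIV = 1\<close> by (simp_all add: expand)
qed

lemma wass_le_integral_abs_diff:
  assumes "integrable M (\<lambda>\<omega>. X \<omega> - Y \<omega>)"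
  shows "wass M X Y \<le> ereal (\<integral>\<omega>. \<bar>X \<omega> - Y \<omega>\<bar> \<partial>M)"
  unfolding wass_def
proof (rule SUP_least)
  fix f :: "real \<Rightarrow> real"
  assume "f \<in> {f. lipschitz_on 1 UNIV f}"
  then have f: "\<bar>f a - f b\<bar> \<le> \<bar>a - b\<bar>" for a b
    using lipschitz_onD[of 1 UNIV f] by (simp add: dist_real_def)
  have "(\<integral>\<omega>. f (X \<omega>) - f (Y \<omega>) \<partial>M) \<le> (\<integral>\<omega>. \<bar>X \<omega> - Y \<omega>\<bar> \<partial>M)"
  proof (cases "integrable M (\<lambda>\<omega>. f (X \<omega>) - f (Y \<omega>))")
    case True
    then show ?thesis
      using assms f by (intro integral_mono) (auto intro: order_trans[OF abs_ge_self])
  next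
    case False
    then show ?thesis by (simp add: not_integrable_integral_eq)
  qed
  then show "ereal (\<integral>\<omega>. f (X \<omega>) - f (Y \<omega>) \<partial>M) \<le> ereal (\<integral>\<omega>. \<bar>X \<omega> - Y \<omega>\<bar> \<partial>M)"
    by simp
qed

lemma integral_abs_diff_triangle:
  fixes X Y Z :: "'a \<Rightarrow> real"
  assumes XY: "integrable M (\<lambda>\<omega>. X \<omega> - Y \<omega>)" and YZ: "integrable M (\<lambda>\<omega>. Y \<omega> - Z \<omega>)"
  shows "integrable M (\<lambda>\<omega>. X \<omega> - Z \<omega>)"
    and "(\<integral>\<omega>. \<bar>X \<omega> - Z \<omega>\<bar> \<partial>M) \<le> (\<integral>\<omega>. \<bar>X \<omega> - Y \<omega>\<bar> \<partial>M) + (\<integral>\<omega>. \<bar>Y \<omega> - Z \<omega>\<bar> \<partial>M)"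
proof -
  show XZ: "integrable M (\<lambda>\<omega>. X \<omega> - Z \<omega>)"
    using Bochner_Integration.integrable_add[OF XY YZ] by simp
  have "(\<integral>\<omega>. \<bar>X \<omega> - Z \<omega>\<bar> \<partial>M) \<le> (\<integral>\<omega>. \<bar>X \<omega> - Y \<omega>\<bar> + \<bar>Y \<omega> - Z \<omega>\<bar> \<partial>M)"
    using XZ XY YZ by (intro integral_mono) auto
  also have "\<dots> = (\<integral>\<omega>. \<bar>X \<omega> - Y \<omega>\<bar> \<partial>M) + (\<integral>\<omega>. \<bar>Y \<omega> - Z \<omega>\<bar> \<partial>M)"
    using XY YZ by (intro Bochner_Integration.integral_add) auto
  finally show "(\<integral>\<omega>. \<bar>X \<omega> - Z \<omega>\<bar> \<partial>M) \<le> \<dots>" .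
qed

lemma hnorm_nonneg: "x \<in> Hsp r \<Longrightarrow> 0 \<le> hnorm r x"
  unfolding hnorm_def Hsp_def by (auto intro!: suminf_nonneg)

lemma hnorm_squared: "x \<in> Hsp r \<Longrightarrow> (hnorm r x)\<^sup>2 = (\<Sum>j. real (Suc j) powr (2 * r) * (x j)\<^sup>2)"
  unfolding hnorm_def Hsp_def by (auto intro!: suminf_nonneg)

lemma projN_in_Hsp:
  assumes "x \<in> Hsp r"
  shows "projN N x \<in> Hsp r" and "hnorm r (projN N x) \<le> hnorm r x"
proof -
  let ?f = "\<lambda>j. real (Suc j) powr (2 * r) * (x j)\<^sup>2"
    and ?g = "\<lambda>j. real (Suc j) powr (2 * r) * (projN N x j)\<^sup>2"
  have f: "summable ?f" using assms by (simp add: Hsp_def)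
  have g_le: "?g j \<le> ?f j" and g_nonneg: "0 \<le> ?g j" for j
    by (auto simp: projN_def)
  have g: "summable ?g"
    using f g_le g_nonneg by (intro summable_comparison_test'[OF f]) auto
  then show "projN N x \<in> Hsp r" by (simp add: Hsp_def)
  have "suminf ?g \<le> suminf ?f"
    using f g g_le by (intro suminf_le) auto
  then show "hnorm r (projN N x) \<le> hnorm r x"
    by (simp add: hnorm_def)
qed

lemma sum_lam_mult_square_le:
  assumes g: "g \<in> Hsp (- s)" and "s \<le> kappa" "0 \<le> c"
    and lam: "\<And>j. 0 \<le> lam j" "\<And>j. lam j \<le> c * real (Suc j) powr (- kappa)"
  shows "(\<Sum>j<N. (lam j * g j)\<^sup>2) \<le> c\<^sup>2 * (hnorm (- s) g)\<^sup>2"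
proof -
  let ?f = "\<lambda>j. real (Suc j) powr (2 * (- s)) * (g j)\<^sup>2"
  have term_le: "(lam j * g j)\<^sup>2 \<le> c\<^sup>2 * ?f j" for j
  proof -
    have "real (Suc j) powr (- kappa) \<le> real (Suc j) powr (- s)"
      using \<open>s \<le> kappa\<close> by (intro powr_mono) auto
    then have "lam j \<le> c * real (Suc j) powr (- s)"
      using lam(2)[of j] \<open>0 \<le> c\<close> by (meson mult_left_mono order_trans)
    then have "(lam j)\<^sup>2 \<le> (c * real (Suc j) powr (- s))\<^sup>2"
      using lam(1)[of j] by (intro power_mono)
    also have "\<dots> = c\<^sup>2 * real (Suc j) powr (2 * (- s))"
      by (simp add: power_mult_distrib powr_powr[symmetric] power2_eq_square powr_add[symmetric])
    finally have "(lam j)\<^sup>2 * (g j)\<^sup>2 \<le> c\<^sup>2 * real (Suc j) powr (2 * (- s)) * (g j)\<^sup>2"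
      by (rule mult_right_mono) simp
    then show ?thesis
      by (simp add: power_mult_distrib mult.assoc)
  qed
  have "(\<Sum>j<N. (lam j * g j)\<^sup>2) \<le> c\<^sup>2 * (\<Sum>j<N. ?f j)"
    using term_le by (simp add: sum_distrib_left sum_mono)
  also have "(\<Sum>j<N. ?f j) \<le> (hnorm (- s) g)\<^sup>2"
    using g by (simp add: hnorm_squared Hsp_def sum_le_suminf)
  finally show ?thesis
    by (simp add: mult_left_mono)
qed

lemma R_var_minus_G_var:
  assumes "0 < N"
  shows "R_var lam grad l N x \<xi> - G_var lam grad l N x \<xi> =
    (\<Sum>i<N. - (l\<^sup>2 / real N) * ((\<xi> i)\<^sup>2 - 1))"
proof -
  have "(\<Sum>i<N. - (l\<^sup>2 / real N) * ((\<xi> i)\<^sup>2 - 1)) =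
      (\<Sum>i<N. l\<^sup>2 / real N) - (\<Sum>i<N. l\<^sup>2 / real N * (\<xi> i)\<^sup>2)"
    unfolding sum_subtractf[symmetric] by (rule sum.cong) (simp_all add: right_diff_distrib)
  also have "\<dots> = l\<^sup>2 - l\<^sup>2 / real N * (\<Sum>i<N. (\<xi> i)\<^sup>2)"
    using assms by (simp add: sum_distrib_left)
  finally show ?thesis
    by (simp add: R_var_def G_var_def)
qed

lemma G_var_minus_Z_var:
  "G_var lam grad l N x \<xi> - Z_var lam l N x \<xi> =
    (\<Sum>i<N. - sqrt (2 * l\<^sup>2 / real N) * (lam i * grad (projN N x) i) * \<xi> i)"
proof -
  have "(\<Sum>j<N. zeta lam grad N x j * \<xi> j) - (\<Sum>j<N. x j / lam j * \<xi> j) =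
      (\<Sum>j<N. lam j * grad (projN N x) j * \<xi> j)"
    by (simp add: sum_subtractf[symmetric] zeta_def projN_def algebra_simps)
  then show ?thesis
    by (simp add: G_var_def Z_var_def sum_distrib_left sum_negf algebra_simps)
qed

lemma integral_abs_R_minus_G_le:
  assumes "0 < N"
  shows "integrable (xi_space N) (\<lambda>\<xi>. R_var lam grad l N x \<xi> - G_var lam grad l N x \<xi>)"
    and "(\<integral>\<xi>. \<bar>R_var lam grad l N x \<xi> - G_var lam grad l N x \<xi>\<bar> \<partial>xi_space N)
      \<le> sqrt 2 * l\<^sup>2 / sqrt (real N)"
proof -
  interpret prob_space std_normal by (rule prob_space_std_normal)
  note centred_sum = integral_abs_PiM_sum_centred_le[OF finite_lessThan
      std_normal_square_minus_one_moments(1,2,3), of N "\<lambda>_. - (l\<^sup>2 / real N)"]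
  show "integrable (xi_space N) (\<lambda>\<xi>. R_var lam grad l N x \<xi> - G_var lam grad l N x \<xi>)"
    using centred_sum(1) by (simp add: xi_space_eq_PiM R_var_minus_G_var[OF assms])
  have "2 * (\<Sum>i<N. (- (l\<^sup>2 / real N))\<^sup>2) = 2 * (l\<^sup>2)\<^sup>2 / real N"
    using assms by (simp add: power_divide power2_eq_square)
  then have "sqrt (2 * (\<Sum>i<N. (- (l\<^sup>2 / real N))\<^sup>2)) = sqrt 2 * l\<^sup>2 / sqrt (real N)"
    by (simp only: real_sqrt_divide real_sqrt_mult real_sqrt_abs abs_power2)
  then show "(\<integral>\<xi>. \<bar>R_var lam grad l N x \<xi> - G_var lam grad l N x \<xi>\<bar> \<partial>xi_space N)
      \<le> sqrt 2 * l\<^sup>2 / sqrt (real N)"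
    using centred_sum(2) std_normal_square_minus_one_moments(4)
    by (simp add: xi_space_eq_PiM R_var_minus_G_var[OF assms])
qed

lemma integral_abs_G_minus_Z_le:
  shows "integrable (xi_space N) (\<lambda>\<xi>. G_var lam grad l N x \<xi> - Z_var lam l N x \<xi>)"
    and "(\<integral>\<xi>. \<bar>G_var lam grad l N x \<xi> - Z_var lam l N x \<xi>\<bar> \<partial>xi_space N)
      \<le> sqrt (2 * l\<^sup>2 / real N) * sqrt (\<Sum>j<N. (lam j * grad (projN N x) j)\<^sup>2)"
proof -
  interpret prob_space std_normal by (rule prob_space_std_normal)
  note centred_sum = integral_abs_PiM_sum_centred_le[OF finite_lessThan
      std_normal_identity_moments(1,2,3), of N "\<lambda>i. - sqrt (2 * l\<^sup>2 / real N) * (lam i * grad (projN N x) i)"]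
  show "integrable (xi_space N) (\<lambda>\<xi>. G_var lam grad l N x \<xi> - Z_var lam l N x \<xi>)"
    using centred_sum(1) by (simp add: xi_space_eq_PiM G_var_minus_Z_var)
  have "(\<Sum>i<N. (- sqrt (2 * l\<^sup>2 / real N) * (lam i * grad (projN N x) i))\<^sup>2) =
      2 * l\<^sup>2 / real N * (\<Sum>j<N. (lam j * grad (projN N x) j)\<^sup>2)"
    by (simp add: power_mult_distrib sum_distrib_left)
  then show "(\<integral>\<xi>. \<bar>G_var lam grad l N x \<xi> - Z_var lam l N x \<xi>\<bar> \<partial>xi_space N)
      \<le> sqrt (2 * l\<^sup>2 / real N) * sqrt (\<Sum>j<N. (lam j * grad (projN N x) j)\<^sup>2)"
    using centred_sum(2) std_normal_identity_moments(4)
    by (simp add: xi_space_eq_PiM G_var_minus_Z_var flip: real_sqrt_mult)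
qed

lemma integral_abs_G_minus_Z_le_growth:
  assumes "s \<le> kappa" "0 \<le> c" "0 \<le> K" "0 \<le> l"
    and lam: "\<And>j. 0 \<le> lam j" "\<And>j. lam j \<le> c * real (Suc j) powr (- kappa)"
    and grad: "\<And>y. y \<in> Hsp s \<Longrightarrow> grad y \<in> Hsp (- s) \<and> hnorm (- s) (grad y) \<le> K * (1 + hnorm s y)"
    and x: "x \<in> Hsp s"
  shows "(\<integral>\<xi>. \<bar>G_var lam grad l N x \<xi> - Z_var lam l N x \<xi>\<bar> \<partial>xi_space N)
    \<le> 2 * l * c * K * sqrt (1 + (hnorm s x)\<^sup>2) / sqrt (real N)"
proof -
  define g where "g = grad (projN N x)"
  define H where "H = hnorm s x"
  have g: "g \<in> Hsp (- s)"
    using grad[OF projN_in_Hsp(1)[OF x]] by (simp add: g_def)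
  have "hnorm (- s) g \<le> K * (1 + hnorm s (projN N x))"
    using grad[OF projN_in_Hsp(1)[OF x]] by (simp add: g_def)
  also have "\<dots> \<le> K * (1 + H)"
    using projN_in_Hsp(2)[OF x] \<open>0 \<le> K\<close> by (simp add: H_def mult_left_mono)
  finally have g_bound: "hnorm (- s) g \<le> K * (1 + H)" .
  have "sqrt (\<Sum>j<N. (lam j * g j)\<^sup>2) \<le> sqrt ((c * hnorm (- s) g)\<^sup>2)"
    using sum_lam_mult_square_le[OF g assms(1,2) lam] by (simp add: power_mult_distrib)
  also have "\<dots> = c * hnorm (- s) g"
    using \<open>0 \<le> c\<close> hnorm_nonneg[OF g] by simp
  also have "\<dots> \<le> c * K * (1 + H)"
    using g_bound \<open>0 \<le> c\<close> by (simp add: mult.assoc mult_left_mono)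
  also have "\<dots> \<le> c * K * (sqrt 2 * sqrt (1 + H\<^sup>2))"
  proof -
    have "(1 + H)\<^sup>2 \<le> 2 * (1 + H\<^sup>2)"
      using sum_squares_ge_zero[of "H - 1" 0] by (simp add: power2_eq_square algebra_simps)
    then have "1 + H \<le> sqrt 2 * sqrt (1 + H\<^sup>2)"
      by (simp add: real_le_rsqrt flip: real_sqrt_mult)
    then show ?thesis
      using \<open>0 \<le> c\<close> \<open>0 \<le> K\<close> by (simp add: mult_left_mono)
  qed
  finally have sum_bound: "sqrt (\<Sum>j<N. (lam j * g j)\<^sup>2) \<le> c * K * (sqrt 2 * sqrt (1 + H\<^sup>2))" .
  have "(\<integral>\<xi>. \<bar>G_var lam grad l N x \<xi> - Z_var lam l N x \<xi>\<bar> \<partial>xi_space N)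
      \<le> sqrt 2 * l / sqrt (real N) * sqrt (\<Sum>j<N. (lam j * g j)\<^sup>2)"
    using integral_abs_G_minus_Z_le(2)[of N lam grad l x] \<open>0 \<le> l\<close>
    by (simp add: g_def real_sqrt_divide real_sqrt_mult)
  also have "\<dots> \<le> sqrt 2 * l / sqrt (real N) * (c * K * (sqrt 2 * sqrt (1 + H\<^sup>2)))"
    using sum_bound by (rule mult_left_mono) (simp add: \<open>0 \<le> l\<close>)
  also have "\<dots> = 2 * l * c * K * sqrt (1 + H\<^sup>2) / sqrt (real N)"
    by simp
  finally show ?thesis
    by (simp add: H_def)
qed

lemma integral_abs_RWM_differences_le:
  fixes l c K :: real
  defines "C \<equiv> sqrt 2 * l\<^sup>2 + 2 * l * c * K"
  assumes "s \<le> kappa" "0 \<le> c" "0 \<le> K" "0 \<le> l"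
    and lam: "\<And>j. 0 \<le> lam j" "\<And>j. lam j \<le> c * real (Suc j) powr (- kappa)"
    and grad: "\<And>y. y \<in> Hsp s \<Longrightarrow> grad y \<in> Hsp (- s) \<and> hnorm (- s) (grad y) \<le> K * (1 + hnorm s y)"
    and x: "x \<in> Hsp s" and "0 < N"
  shows "integrable (xi_space N) (\<lambda>\<xi>. R_var lam grad l N x \<xi> - G_var lam grad l N x \<xi>)"
    and "integrable (xi_space N) (\<lambda>\<xi>. G_var lam grad l N x \<xi> - Z_var lam l N x \<xi>)"
    and "integrable (xi_space N) (\<lambda>\<xi>. R_var lam grad l N x \<xi> - Z_var lam l N x \<xi>)"
    and "(\<integral>\<xi>. \<bar>R_var lam grad l N x \<xi> - G_var lam grad l N x \<xi>\<bar> \<partial>xi_space N) \<le> C / sqrt (real N)"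
    and "(\<integral>\<xi>. \<bar>G_var lam grad l N x \<xi> - Z_var lam l N x \<xi>\<bar> \<partial>xi_space N)
      \<le> C * sqrt (1 + (hnorm s x)\<^sup>2) / sqrt (real N)"
    and "(\<integral>\<xi>. \<bar>R_var lam grad l N x \<xi> - Z_var lam l N x \<xi>\<bar> \<partial>xi_space N)
      \<le> C * sqrt (1 + (hnorm s x)\<^sup>2) / sqrt (real N)"
proof -
  define S where "S = sqrt (1 + (hnorm s x)\<^sup>2)"
  note RG = integral_abs_R_minus_G_le[OF \<open>0 < N\<close>, of lam grad l x]
  note GZ = integral_abs_G_minus_Z_le[of N lam grad l x]
  note GZ_bound = integral_abs_G_minus_Z_le_growth[OF assms(2-5) lam grad x, where N = N, folded S_def]
  note RZ = integral_abs_diff_triangle[OF RG(1) GZ(1)]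
  show "integrable (xi_space N) (\<lambda>\<xi>. R_var lam grad l N x \<xi> - G_var lam grad l N x \<xi>)"
    "integrable (xi_space N) (\<lambda>\<xi>. G_var lam grad l N x \<xi> - Z_var lam l N x \<xi>)"
    "integrable (xi_space N) (\<lambda>\<xi>. R_var lam grad l N x \<xi> - Z_var lam l N x \<xi>)"
    using RG(1) GZ(1) RZ(1) .
  have "1 \<le> S" "0 \<le> 2 * l * c * K"
    using assms(2-5) by (simp_all add: S_def)
  then have "sqrt 2 * l\<^sup>2 \<le> C" "sqrt 2 * l\<^sup>2 + 2 * l * c * K * S \<le> C * S"
    "2 * l * c * K * S \<le> C * S"
    using mult_left_mono[of 1 S "sqrt 2 * l\<^sup>2"] by (simp_all add: C_def distrib_right)
  then have "sqrt 2 * l\<^sup>2 / sqrt (real N) \<le> C / sqrt (real N)"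
    "2 * l * c * K * S / sqrt (real N) \<le> C * S / sqrt (real N)"
    "(sqrt 2 * l\<^sup>2 + 2 * l * c * K * S) / sqrt (real N) \<le> C * S / sqrt (real N)"
    by (simp_all add: divide_right_mono)
  then show "(\<integral>\<xi>. \<bar>R_var lam grad l N x \<xi> - G_var lam grad l N x \<xi>\<bar> \<partial>xi_space N) \<le> C / sqrt (real N)"
    "(\<integral>\<xi>. \<bar>G_var lam grad l N x \<xi> - Z_var lam l N x \<xi>\<bar> \<partial>xi_space N) \<le> C * S / sqrt (real N)"
    "(\<integral>\<xi>. \<bar>R_var lam grad l N x \<xi> - Z_var lam l N x \<xi>\<bar> \<partial>xi_space N) \<le> C * S / sqrt (real N)"
    using RG(2) GZ_bound RZ(2) unfolding add_divide_distrib by linarith+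
qed

theorem lemma7p5:
  fixes lam :: "nat \<Rightarrow> real" and kappa s l :: real
    and Psi :: "(nat \<Rightarrow> real) \<Rightarrow> real"
    and grad :: "(nat \<Rightarrow> real) \<Rightarrow> (nat \<Rightarrow> real)"
  assumes A1_kappa: "kappa > 1/2"
    and A1_lam: "\<exists>c1 c2. 0 < c1 \<and> 0 < c2 \<and>
        (\<forall>j. c1 * real (Suc j) powr (- kappa) \<le> lam j \<and> lam j \<le> c2 * real (Suc j) powr (- kappa))"
    and A2: "0 \<le> s" "s < kappa - 1/2"
    and A3: "\<exists>K. \<forall>x\<in>Hsp s. 0 \<le> Psi x \<and> Psi x \<le> K * (1 + (hnorm s x)\<^sup>2)"
    and A4_grad: "\<forall>x\<in>Hsp s. is_gradient s Psi x (grad x)"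
    and A4_gradbd: "\<exists>K. \<forall>x\<in>Hsp s. hnorm (-s) (grad x) \<le> K * (1 + hnorm s x)"
    and A4_hess: "\<exists>K. \<forall>x\<in>Hsp s. \<exists>D. is_hessian s grad x D \<and> bdd_op s K D"
    and l_pos: "l > 0"
  shows "\<exists>C. \<forall>N\<ge>1. \<forall>x\<in>Hcap s lam.
      integrable (xi_space N) (\<lambda>xi. R_var lam grad l N x xi - G_var lam grad l N x xi) \<and>
      integrable (xi_space N) (\<lambda>xi. G_var lam grad l N x xi - Z_var lam l N x xi) \<and>
      integrable (xi_space N) (\<lambda>xi. R_var lam grad l N x xi - Z_var lam l N x xi) \<and>
      wass (xi_space N) (R_var lam grad l N x) (G_var lam grad l N x)
        \<le> ereal (C / sqrt (real N)) \<and>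
      wass (xi_space N) (G_var lam grad l N x) (Z_var lam l N x)
        \<le> ereal (C * sqrt (1 + (hnorm s x)\<^sup>2) / sqrt (real N)) \<and>
      wass (xi_space N) (R_var lam grad l N x) (Z_var lam l N x)
        \<le> ereal (\<integral>xi. \<bar>R_var lam grad l N x xi - Z_var lam l N x xi\<bar> \<partial>xi_space N) \<and>
      (\<integral>xi. \<bar>R_var lam grad l N x xi - Z_var lam l N x xi\<bar> \<partial>xi_space N)
        \<le> C * sqrt (1 + (hnorm s x)\<^sup>2) / sqrt (real N)"
proof -
  obtain c1 c2 where "0 < c1" "0 < c2" and lam_bounds:
    "\<And>j. c1 * real (Suc j) powr (- kappa) \<le> lam j" "\<And>j. lam j \<le> c2 * real (Suc j) powr (- kappa)"
    using A1_lam by blast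
  have lam_nonneg: "0 \<le> lam j" for j
    using lam_bounds(1)[of j] \<open>0 < c1\<close> by (smt (verit) powr_ge_zero zero_le_mult_iff)
  obtain K0 where K0: "\<And>x. x \<in> Hsp s \<Longrightarrow> hnorm (-s) (grad x) \<le> K0 * (1 + hnorm s x)"
    using A4_gradbd by blast
  define K where "K = max K0 0"
  have grad: "grad y \<in> Hsp (- s) \<and> hnorm (- s) (grad y) \<le> K * (1 + hnorm s y)" if "y \<in> Hsp s" for y
    using A4_grad K0[OF that] hnorm_nonneg[OF that] that
    by (auto simp: is_gradient_def K_def intro: order_trans mult_right_mono)
  have "s \<le> kappa" "0 \<le> K" "0 \<le> c2" "0 \<le> l"
    using A2 \<open>0 < c2\<close> l_pos by (simp_all add: K_def)
  note bounds = integral_abs_RWM_differences_le[OF \<open>s \<le> kappa\<close> \<open>0 \<le> c2\<close> \<open>0 \<le> K\<close> \<open>0 \<le> l\<close>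
      lam_nonneg lam_bounds(2) grad]
  show ?thesis
    using bounds by (intro exI[of _ "sqrt 2 * l\<^sup>2 + 2 * l * c2 * K"] allI impI ballI)
      (auto simp: Hcap_def intro!: order_trans[OF wass_le_integral_abs_diff])
qed

end
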